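(* Let $M,M'\in\mathbb{C}^{2\times 2}$ be nonsingular matrices with $M'=M+\delta I$ for some nonzero $\delta\in\mathbb{C}$, where $M$ has distinct eigenvalues. If the two eigenvalues of $M$ have equal absolute value and the two eigenvalues of $M'$ have equal absolute value, then there exist $r,s\in\mathbb{R}$ such that $\mathrm{tr}(M)=r\delta$ and $\det(M)=s\delta^2$. *)

theory Defs
  imports "HOL-Analysis.Analysis"
begin

definition is_eigenvalue :: "'a::field ^'n^'n \<Rightarrow> 'a \<Rightarrow> bool" where
  "is_eigenvalue M lam \<longleftrightarrow> (\<exists>v. v \<noteq> 0 \<and> M *v v = lam *s v)"

end

theory Submission
  imports Defs
begin

text \<open>The eigenvalues \<open>a \<noteq> b\<close> of \<open>M\<close> are the roots of its characteristic polynomial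
  \<open>x\<^sup>2 - trace M * x + det M\<close>, so \<open>trace M = a + b\<close> and \<open>det M = a * b\<close>; those of \<open>M + \<delta> I\<close>
  are \<open>a + \<delta>\<close> and \<open>b + \<delta>\<close>. After scaling by \<open>\<delta>\<close>, the points \<open>\<alpha> = a / \<delta>\<close> and \<open>\<beta> = b / \<delta>\<close>
  are equidistant both from \<open>0\<close> and from \<open>-1\<close>. Two distinct such points are mirror images in
  the real axis, so \<open>\<beta> = cnj \<alpha>\<close> and both \<open>\<alpha> + \<beta>\<close> and \<open>\<alpha> * \<beta>\<close> are real.\<close>

lemma mat_mult_vector: "mat c *v v = c *s v"
  by (simp add: vec_eq_iff mat_def matrix_vector_mult_def if_distrib[of "\<lambda>x. x * _"]
      cong del: if_weak_cong)

lemma is_eigenvalue_add_mat: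
  assumes "is_eigenvalue M x"
  shows "is_eigenvalue (M + mat c) (x + c)"
proof -
  obtain v where "v \<noteq> 0" "M *v v = x *s v"
    using assms unfolding is_eigenvalue_def by blast
  then have "(M + mat c) *v v = (x + c) *s v"
    by (simp add: matrix_vector_mult_add_rdistrib mat_mult_vector vector_sadd_rdistrib)
  with \<open>v \<noteq> 0\<close> show ?thesis
    unfolding is_eigenvalue_def by blast
qed

lemma is_eigenvalue_imp_det_zero:
  fixes M :: "'a::field^'n^'n"
  assumes "is_eigenvalue M x"
  shows "det (M - mat x) = 0"
proof -
  obtain v where "v \<noteq> 0" "M *v v = x *s v"
    using assms unfolding is_eigenvalue_def by blast
  then have "(M - mat x) *v v = 0"
    by (simp add: matrix_vector_mult_diff_rdistrib mat_mult_vector)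
  with \<open>v \<noteq> 0\<close> have "\<not> invertible (M - mat x)"
    by (meson invertible_left_inverse matrix_left_invertible_ker)
  then show ?thesis
    by (simp add: invertible_det_nz)
qed

lemma det_2_minus_mat:
  fixes M :: "'a::comm_ring_1^2^2"
  shows "det (M - mat x) = x\<^sup>2 - trace M * x + det M"
  by (simp add: det_2 trace_def sum_2 mat_def power2_eq_square algebra_simps)

lemma quadratic_distinct_roots_vieta:
  fixes a b t d :: "'a::idom"
  assumes "a \<noteq> b" "a\<^sup>2 - t * a + d = 0" "b\<^sup>2 - t * b + d = 0"
  shows "t = a + b" "d = a * b"
proof -
  have "(a - b) * (a + b - t) = (a\<^sup>2 - t * a + d) - (b\<^sup>2 - t * b + d)"
    by (simp add: power2_eq_square algebra_simps)
  with assms show "t = a + b"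
    by simp
  with assms(2) show "d = a * b"
    by (simp add: power2_eq_square algebra_simps)
qed

lemma eq_cnj_if_cmod_eq_and_cmod_add_one_eq:
  fixes \<alpha> \<beta> :: complex
  assumes "\<alpha> \<noteq> \<beta>" "cmod \<alpha> = cmod \<beta>" "cmod (\<alpha> + 1) = cmod (\<beta> + 1)"
  shows "\<beta> = cnj \<alpha>"
proof -
  have "(Re \<alpha>)\<^sup>2 + (Im \<alpha>)\<^sup>2 = (Re \<beta>)\<^sup>2 + (Im \<beta>)\<^sup>2"
    using assms(2) by (simp add: cmod_def)
  moreover have "(Re \<alpha> + 1)\<^sup>2 + (Im \<alpha>)\<^sup>2 = (Re \<beta> + 1)\<^sup>2 + (Im \<beta>)\<^sup>2"
    using assms(3) by (simp add: cmod_def)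
  ultimately have re: "Re \<alpha> = Re \<beta>"
    by (simp add: power2_eq_square algebra_simps)
  with \<open>(Re \<alpha>)\<^sup>2 + (Im \<alpha>)\<^sup>2 = (Re \<beta>)\<^sup>2 + (Im \<beta>)\<^sup>2\<close> have "Im \<alpha> = Im \<beta> \<or> Im \<alpha> = - Im \<beta>"
    by (simp add: power2_eq_iff)
  moreover have "Im \<alpha> \<noteq> Im \<beta>"
    using assms(1) re complex_eqI by blast
  ultimately show ?thesis
    using re by (simp add: complex_eq_iff)
qed

theorem corollary4p8:
  fixes M M' :: "complex^2^2" and \<delta> :: complex
  assumes "invertible M" and "invertible M'"
    and "\<delta> \<noteq> 0"
    and "M' = M + mat \<delta>"
    and "card {x. is_eigenvalue M x} = 2"
    and "\<forall>x y. is_eigenvalue M x \<and> is_eigenvalue M y \<longrightarrow> cmod x = cmod y"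
    and "\<forall>x y. is_eigenvalue M' x \<and> is_eigenvalue M' y \<longrightarrow> cmod x = cmod y"
  shows "\<exists>r s :: real. trace M = complex_of_real r * \<delta> \<and> det M = complex_of_real s * \<delta>\<^sup>2"
proof -
  obtain a b where ab: "{x. is_eigenvalue M x} = {a, b}" "a \<noteq> b"
    using assms(5) card_2_iff by metis
  then have ea: "is_eigenvalue M a" and eb: "is_eigenvalue M b"
    by blast+
  have "a\<^sup>2 - trace M * a + det M = 0" "b\<^sup>2 - trace M * b + det M = 0"
    using is_eigenvalue_imp_det_zero[OF ea] is_eigenvalue_imp_det_zero[OF eb]
    by (simp_all only: det_2_minus_mat)
  then have tr: "trace M = a + b" and dt: "det M = a * b"
    using quadratic_distinct_roots_vieta[OF \<open>a \<noteq> b\<close>] by simp_all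
  define \<alpha> where "\<alpha> = a / \<delta>"
  have "b / \<delta> = cnj \<alpha>"
  proof (rule eq_cnj_if_cmod_eq_and_cmod_add_one_eq)
    show "\<alpha> \<noteq> b / \<delta>"
      using ab(2) assms(3) by (simp add: \<alpha>_def)
    have "cmod a = cmod b"
      using assms(6) ea eb by blast
    then show "cmod \<alpha> = cmod (b / \<delta>)"
      by (simp add: \<alpha>_def norm_divide)
    have "cmod (a + \<delta>) = cmod (b + \<delta>)"
      using assms(4,7) is_eigenvalue_add_mat[OF ea] is_eigenvalue_add_mat[OF eb] by blast
    then show "cmod (\<alpha> + 1) = cmod (b / \<delta> + 1)"
      using assms(3) by (simp add: \<alpha>_def divide_add_eq_iff norm_divide)
  qed
  then have "trace M = (\<alpha> + cnj \<alpha>) * \<delta>" "det M = (\<alpha> * cnj \<alpha>) * \<delta>\<^sup>2"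
    using assms(3) by (simp_all add: tr dt \<alpha>_def field_simps power2_eq_square)
  then have "trace M = complex_of_real (2 * Re \<alpha>) * \<delta>"
    and "det M = complex_of_real ((Re \<alpha>)\<^sup>2 + (Im \<alpha>)\<^sup>2) * \<delta>\<^sup>2"
    by (simp_all only: complex_add_cnj complex_mult_cnj)
  then show ?thesis
    by blast
qed

end
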